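(* For both CCSK$^{\mathrm P}$ and CCSK, if $t_1,t_2$ are transitions such that $t_1\mathrel\iota t_2$, then $t_1$ and $t_2$ have different keys.
   Context: Names $\mathsf N$ with bijection $\overline\cdot$ onto disjoint co-names; $\mathsf L=\mathsf N\cup\overline{\mathsf N}\cup\{\tau\}$ ($\alpha$ over $\mathsf L$, $\lambda$ over $\mathsf L\setminus\{\tau\}$); keys $\mathsf K$ denumerable. CCSK processes $X::=\mathbf 0\mid\alpha.X\mid X\backslash\lambda\mid X+Y\mid X|Y\mid\alpha[k].X$; $\mathrm{keys}(X)$ keys in $X$. Directions $D\in\{\mathrm L,\mathrm R\}$, $\bar{\mathrm L}=\mathrm R$, $\bar{\mathrm R}=\mathrm L$. Proof keyed labels $\theta::=\upsilon\alpha[k]\mid\upsilon\langle\upsilon_1\lambda[k],\upsilon_2\overline\lambda[k]\rangle$ ($\upsilon,\upsilon_i\in\{|_{\mathrm L},|_{\mathrm R},+_{\mathrm L},+_{\mathrm R}\}^*$), $\ell(\upsilon\alpha[k])=\alpha$, $\ell(\upsilon\langle\cdots\rangle)=\tau$, $\mathrm{key}(\theta)=k$. Forward CCSK$^{\mathrm P}$ transitions: least relation closed under (act) $\alpha.X\xrightarrow{\alpha[k]}\alpha[k].X$ if $\mathrm{keys}(X)=\emptyset$; (pre) $X\xrightarrow\theta X',\mathrm{key}(\theta)\ne k\Rightarrow\alpha[k].X\xrightarrow\theta\alpha[k].X'$; (res) $X\xrightarrow\theta X',\ell(\theta)\notin\{\lambda,\overline\lambda\}\Rightarrow X\backslash\lambda\xrightarrow\theta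 X'\backslash\lambda$; (par) $X\xrightarrow\theta X',\mathrm{key}(\theta)\notin\mathrm{keys}(Y)\Rightarrow X|Y\xrightarrow{|_{\mathrm L}\theta}X'|Y$, $Y|X\xrightarrow{|_{\mathrm R}\theta}Y|X'$; (syn) $X\xrightarrow{\upsilon_1\lambda[k]}X',Y\xrightarrow{\upsilon_2\overline\lambda[k]}Y'\Rightarrow X|Y\xrightarrow{\langle\upsilon_1\lambda[k],\upsilon_2\overline\lambda[k]\rangle}X'|Y'$; (sum) $X\xrightarrow\theta X',\mathrm{keys}(Y)=\emptyset\Rightarrow X+Y\xrightarrow{+_{\mathrm L}\theta}X'+Y$, $Y+X\xrightarrow{+_{\mathrm R}\theta}Y+X'$. Backward transitions are converses of forward ones; the key of a transition is the key of its label. Transitions are connected if there is a path (sequence of composable forward/backward transitions) from the source of one to the target of the other. CCSK: same processes; each CCSK$^{\mathrm P}$ transition with label $\theta$ yields a CCSK transition between the same processes with label $\ell(\theta)[\mathrm{key}(\theta)]$ (a bijection; $\hat t$ denotes the CCSK$^{\mathrm P}$ transition of CCSK transition $t$). Independence $\iota$ on proof labels: least relation closed under ($\theta_{\mathrm L},\theta_{\mathrm R}$ components of a synchronisation label) (C1) $+_D\theta\mathrel\iota+_D\theta'$ if $\theta\mathrel\iota\theta'$; (P1) $|_D\theta\mathrel\iota|_D\theta'$ if $\theta\mathrel\iota\theta'$; (P2$_k$) $|_D\theta\mathrel\iota|_{\bar D}\theta'$ if $\mathrm{key}(\theta)\ne\mathrm{key}(\theta')$; (S1) $|_D\theta\mathrel\iota\langle\theta_{\mathrm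 L},\theta_{\mathrm R}\rangle$ if $\theta\mathrel\iota\theta_D$; (S2) $\langle\theta_{\mathrm L},\theta_{\mathrm R}\rangle\mathrel\iota|_D\theta$ if $\theta_D\mathrel\iota\theta$; (S3) $\langle\theta_1,\theta_2\rangle\mathrel\iota\langle\theta_1',\theta_2'\rangle$ if $\theta_1\mathrel\iota\theta_1'$, $\theta_2\mathrel\iota\theta_2'$. For CCSK$^{\mathrm P}$ transitions $t_1\mathrel\iota t_2$ iff connected and labels $\iota$; for CCSK transitions $t_1\mathrel\iota t_2$ iff connected and labels of $\hat t_1,\hat t_2$ satisfy $\iota$. *)

theory Defs
  imports Main
begin

datatype 'n vis = Nm 'n | CoNm 'n

fun co :: "'n vis \<Rightarrow> 'n vis" where
  "co (Nm a) = CoNm a"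
| "co (CoNm a) = Nm a"

datatype 'n act = Vis "'n vis" | Tau

type_synonym key = nat

datatype 'n proc =
    Nil
  | Pre "'n act" "'n proc"
  | Res "'n proc" "'n vis"
  | Sum "'n proc" "'n proc"
  | Par "'n proc" "'n proc"
  | KPre "'n act" key "'n proc"

fun keys :: "'n proc \<Rightarrow> key set" where
  "keys Nil = {}"
| "keys (Pre a X) = keys X"
| "keys (Res X l) = keys X"
| "keys (Sum X Y) = keys X \<union> keys Y"
| "keys (Par X Y) = keys X \<union> keys Y"
| "keys (KPre a k X) = insert k (keys X)"

datatype dir = L | R

fun dbar :: "dir \<Rightarrow> dir" where
  "dbar L = R" | "dbar R = L"

(* Proof keyed labels; prefixes |_D and +_D are constructors PL / SL. *)
datatype 'n plab =
    PAct "'n act" key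
  | PSyn "'n plab" "'n plab"
  | PL dir "'n plab"
  | SL dir "'n plab"

fun ell :: "'n plab \<Rightarrow> 'n act" where
  "ell (PAct a k) = a"
| "ell (PSyn x y) = Tau"
| "ell (PL d x) = ell x"
| "ell (SL d x) = ell x"

fun pkey :: "'n plab \<Rightarrow> key" where
  "pkey (PAct a k) = k"
| "pkey (PSyn x y) = pkey x"
| "pkey (PL d x) = pkey x"
| "pkey (SL d x) = pkey x"

fun base :: "'n plab \<Rightarrow> ('n act \<times> key) option" where
  "base (PAct a k) = Some (a, k)"
| "base (PSyn x y) = None"
| "base (PL d x) = base x"
| "base (SL d x) = base x"

inductive pstep :: "'n proc \<Rightarrow> 'n plab \<Rightarrow> 'n proc \<Rightarrow> bool" where
  act: "keys X = {} \<Longrightarrow> pstep (Pre a X) (PAct a k) (KPre a k X)"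
| pre: "pstep X th X' \<Longrightarrow> pkey th \<noteq> k \<Longrightarrow> pstep (KPre a k X) th (KPre a k X')"
| res: "pstep X th X' \<Longrightarrow> ell th \<noteq> Vis l \<Longrightarrow> ell th \<noteq> Vis (co l)
        \<Longrightarrow> pstep (Res X l) th (Res X' l)"
| parL: "pstep X th X' \<Longrightarrow> pkey th \<notin> keys Y \<Longrightarrow> pstep (Par X Y) (PL L th) (Par X' Y)"
| parR: "pstep X th X' \<Longrightarrow> pkey th \<notin> keys Y \<Longrightarrow> pstep (Par Y X) (PL R th) (Par Y X')"
| syn: "pstep X th1 X' \<Longrightarrow> pstep Y th2 Y' \<Longrightarrow> base th1 = Some (Vis l, k)
        \<Longrightarrow> base th2 = Some (Vis (co l), k) \<Longrightarrow> pstep (Par X Y) (PSyn th1 th2) (Par X' Y')"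
| sumL: "pstep X th X' \<Longrightarrow> keys Y = {} \<Longrightarrow> pstep (Sum X Y) (SL L th) (Sum X' Y)"
| sumR: "pstep X th X' \<Longrightarrow> keys Y = {} \<Longrightarrow> pstep (Sum Y X) (SL R th) (Sum Y X')"

fun comp :: "dir \<Rightarrow> 'n plab \<Rightarrow> 'n plab \<Rightarrow> 'n plab" where
  "comp L x y = x" | "comp R x y = y"

inductive indep :: "'n plab \<Rightarrow> 'n plab \<Rightarrow> bool" where
  C1: "indep th th' \<Longrightarrow> indep (SL D th) (SL D th')"
| P1: "indep th th' \<Longrightarrow> indep (PL D th) (PL D th')"
| P2: "pkey th \<noteq> pkey th' \<Longrightarrow> indep (PL D th) (PL (dbar D) th')"
| S1: "indep th (comp D thL thR) \<Longrightarrow> indep (PL D th) (PSyn thL thR)"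
| S2: "indep (comp D thL thR) th \<Longrightarrow> indep (PSyn thL thR) (PL D th)"
| S3: "indep th1 th1' \<Longrightarrow> indep th2 th2' \<Longrightarrow> indep (PSyn th1 th2) (PSyn th1' th2')"

(* CCSK^P transitions, forward (True) or backward (False): source, label, target, direction *)
datatype 'n ptrans = PT "'n proc" "'n plab" "'n proc" bool

fun pvalid :: "'n ptrans \<Rightarrow> bool" where
  "pvalid (PT X th Y fw) = (if fw then pstep X th Y else pstep Y th X)"

fun psrc :: "'n ptrans \<Rightarrow> 'n proc" where "psrc (PT X th Y fw) = X"
fun ptgt :: "'n ptrans \<Rightarrow> 'n proc" where "ptgt (PT X th Y fw) = Y"
fun plabel :: "'n ptrans \<Rightarrow> 'n plab" where "plabel (PT X th Y fw) = th"
definition ptkey :: "'n ptrans \<Rightarrow> key" where "ptkey t = pkey (plabel t)"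

definition pedge :: "'n proc \<Rightarrow> 'n proc \<Rightarrow> bool" where
  "pedge X Y = (\<exists>th. pstep X th Y \<or> pstep Y th X)"

definition pconnected :: "'n ptrans \<Rightarrow> 'n ptrans \<Rightarrow> bool" where
  "pconnected t1 t2 = pedge\<^sup>*\<^sup>* (psrc t1) (ptgt t2)"

definition pindep :: "'n ptrans \<Rightarrow> 'n ptrans \<Rightarrow> bool" where
  "pindep t1 t2 = (pvalid t1 \<and> pvalid t2 \<and> pconnected t1 t2 \<and> indep (plabel t1) (plabel t2))"

definition cstep :: "'n proc \<Rightarrow> 'n act \<Rightarrow> key \<Rightarrow> 'n proc \<Rightarrow> bool" where
  "cstep X a k Y = (\<exists>th. pstep X th Y \<and> ell th = a \<and> pkey th = k)"

datatype 'n ctrans = CT "'n proc" "'n act" key "'n proc" bool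

fun cvalid :: "'n ctrans \<Rightarrow> bool" where
  "cvalid (CT X a k Y fw) = (if fw then cstep X a k Y else cstep Y a k X)"

fun csrc :: "'n ctrans \<Rightarrow> 'n proc" where "csrc (CT X a k Y fw) = X"
fun ctgt :: "'n ctrans \<Rightarrow> 'n proc" where "ctgt (CT X a k Y fw) = Y"
fun ctkey :: "'n ctrans \<Rightarrow> key" where "ctkey (CT X a k Y fw) = k"

fun hat :: "'n ctrans \<Rightarrow> 'n ptrans" where
  "hat (CT X a k Y fw) =
     PT X (THE th. (if fw then pstep X th Y else pstep Y th X) \<and> ell th = a \<and> pkey th = k) Y fw"

definition cedge :: "'n proc \<Rightarrow> 'n proc \<Rightarrow> bool" where
  "cedge X Y = (\<exists>a k. cstep X a k Y \<or> cstep Y a k X)"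

definition cconnected :: "'n ctrans \<Rightarrow> 'n ctrans \<Rightarrow> bool" where
  "cconnected t1 t2 = cedge\<^sup>*\<^sup>* (csrc t1) (ctgt t2)"

definition cindep :: "'n ctrans \<Rightarrow> 'n ctrans \<Rightarrow> bool" where
  "cindep t1 t2 = (cvalid t1 \<and> cvalid t2 \<and> cconnected t1 t2
                   \<and> indep (plabel (hat t1)) (plabel (hat t2)))"

end

theory Submission
  imports Defs
begin

(* Every label produced by a derivation is key-coherent: the two components of a
   synchronisation carry the same key. Rules S1 and S2 compare a prefix label with one
   component of a synchronisation, so on coherent labels they compare it with the
   synchronisation's own key, and every rule of iota then forces distinct keys. For CCSK
   the only extra point is that a transition determines its proof label: a step always
   changes its process (its key goes from unused to used), so source and target fix
   which rule derived it. *)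

lemma pkey_base: "base th = Some (a, k) \<Longrightarrow> pkey th = k"
  by (induction th) auto

lemma pstep_key_fresh: "pstep X th Y \<Longrightarrow> pkey th \<notin> keys X \<and> pkey th \<in> keys Y"
proof (induction rule: pstep.induct)
  case (syn X th1 X' Y th2 Y' l k)
  then show ?case using pkey_base[OF syn(3)] pkey_base[OF syn(4)] by auto
qed auto

lemma pstep_neq: "pstep X th Y \<Longrightarrow> X \<noteq> Y"
  using pstep_key_fresh by blast

lemma pstep_label_unique: "pstep X th Y \<Longrightarrow> pstep X th' Y \<Longrightarrow> th' = th"
proof (induction arbitrary: th' rule: pstep.induct)
  case (syn X th1 X' Y th2 Y' l k)
  from syn.prems show ?case using pstep_neq[OF syn.hyps(1)] pstep_neq[OF syn.hyps(2)]
    by (cases rule: pstep.cases) (auto intro: syn.IH)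
qed (erule pstep.cases; auto dest: pstep_neq)+

fun key_coherent :: "'n plab \<Rightarrow> bool" where
  "key_coherent (PAct a k) = True"
| "key_coherent (PSyn x y) = (key_coherent x \<and> key_coherent y \<and> pkey x = pkey y)"
| "key_coherent (PL d x) = key_coherent x"
| "key_coherent (SL d x) = key_coherent x"

lemma pstep_key_coherent: "pstep X th Y \<Longrightarrow> key_coherent th"
  by (induction rule: pstep.induct) (auto dest: pkey_base)

lemma key_coherent_comp:
  "key_coherent (PSyn x y) \<Longrightarrow> key_coherent (comp D x y) \<and> pkey (comp D x y) = pkey (PSyn x y)"
  by (cases D) auto

lemma indep_pkey_neq:
  "indep th th' \<Longrightarrow> key_coherent th \<Longrightarrow> key_coherent th' \<Longrightarrow> pkey th \<noteq> pkey th'"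
proof (induction rule: indep.induct)
  case (S1 th D thL thR)
  then show ?case using key_coherent_comp[of thL thR D] by auto
next
  case (S2 D thL thR th)
  then show ?case using key_coherent_comp[of thL thR D] by auto
qed auto

lemma pvalid_key_coherent: "pvalid t \<Longrightarrow> key_coherent (plabel t)"
  by (cases t) (auto split: if_splits intro: pstep_key_coherent)

lemma pindep_ptkey_neq: "pindep t1 t2 \<Longrightarrow> ptkey t1 \<noteq> ptkey t2"
  unfolding pindep_def ptkey_def by (auto dest: indep_pkey_neq pvalid_key_coherent)

lemma pvalid_hat:
  assumes "cvalid t"
  shows "pvalid (hat t) \<and> ptkey (hat t) = ctkey t"
proof (cases t)
  case (CT X a k Y fw)
  define P where "P th \<longleftrightarrow> (if fw then pstep X th Y else pstep Y th X) \<and> ell th = a \<and> pkey th = k"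
    for th
  obtain th where th: "P th"
    using assms CT unfolding P_def by (cases fw) (auto simp: cstep_def)
  have "P th' \<Longrightarrow> th' = th" for th'
    using th unfolding P_def by (cases fw) (auto intro: pstep_label_unique)
  then have "(THE th. P th) = th"
    using th by (rule the_equality[rotated])
  moreover have "hat t = PT X (THE th. P th) Y fw"
    using CT unfolding P_def by simp
  ultimately show ?thesis
    using th CT unfolding P_def ptkey_def by simp
qed

lemma cedge_eq_pedge: "cedge = pedge"
  unfolding cedge_def pedge_def cstep_def by (intro ext) blast

lemma cindep_pindep_hat: "cindep t1 t2 \<Longrightarrow> pindep (hat t1) (hat t2)"
proof -
  have [simp]: "psrc (hat t) = csrc t" "ptgt (hat t) = ctgt t" for t :: "'n ctrans"
    by (cases t; simp)+
  show "cindep t1 t2 \<Longrightarrow> pindep (hat t1) (hat t2)"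
    unfolding cindep_def pindep_def pconnected_def cconnected_def cedge_eq_pedge
    using pvalid_hat by auto
qed

theorem lemma6p6:
  shows "(\<forall>t1 t2 :: 'n ptrans. pindep t1 t2 \<longrightarrow> ptkey t1 \<noteq> ptkey t2)
       \<and> (\<forall>t1 t2 :: 'n ctrans. cindep t1 t2 \<longrightarrow> ctkey t1 \<noteq> ctkey t2)"
proof (intro conjI allI impI)
  fix t1 t2 :: "'n ptrans"
  show "pindep t1 t2 \<Longrightarrow> ptkey t1 \<noteq> ptkey t2"
    by (rule pindep_ptkey_neq)
next
  fix t1 t2 :: "'n ctrans"
  assume "cindep t1 t2"
  then have "ptkey (hat t1) \<noteq> ptkey (hat t2)"
    by (intro pindep_ptkey_neq cindep_pindep_hat)
  moreover have "cvalid t1" "cvalid t2"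
    using \<open>cindep t1 t2\<close> unfolding cindep_def by auto
  ultimately show "ctkey t1 \<noteq> ctkey t2"
    using pvalid_hat by metis
qed

end
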